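(* Let $\epsilon>0$. For all $\widehat\phi_1,\widehat\phi_2\in\mathcal{M}_\epsilon$ with $\widehat\phi_1\le\widehat\phi_2$ entrywise, one has $\widehat\Psi(\widehat\phi_1)\ge\widehat\Psi(\widehat\phi_2)$ entrywise.
   Context: Discrete setting: $\Omega=(0,1)$, $T>0$, $\sigma>0$; $m_0:[0,1]\to\mathbb{R}$ bounded with $m_0\ge0$. $f:[0,1]\times\mathbb{R}\to\mathbb{R}$ is continuous and nonincreasing in its second variable, bounded, and $f\le0$. For positive integers $I,J$: $\Delta t=T/I$, $\Delta x=1/J$, $x_j=j\Delta x$. $\mathcal{M}$ is the set of real matrices $(m_{i,j})_{0\le i\le I,0\le j\le J}$, $\mathcal{M}_\epsilon=\{m\in\mathcal{M}: m_{i,j}\ge\epsilon\ \forall i,j\}$. For $\widehat\phi\in\mathcal{M}_\epsilon$, $\widehat\Psi(\widehat\phi)$ is the unique $\widehat\psi\in\mathcal{M}$ with $\widehat\psi_{0,j}=m_0(x_j)/\widehat\phi_{0,j}$ and, for $0\le i\le I-1$, $0\le j\le J$, $\frac{\widehat\psi_{i+1,j}-\widehat\psi_{i,j}}{\Delta t}-\frac{\sigma^2}{2}\frac{\widehat\psi_{i+1,j+1}-2\widehat\psi_{i+1,j}+\widehat\psi_{i+1,j-1}}{(\Delta x)^2}=\frac{1}{\sigma^2}f(x_j,\widehat\phi_{i+1,j}\widehat\psi_{i+1,j})\widehat\psi_{i+1,j}$, with conventions $\widehat\psi_{i,-1}=\widehat\psi_{i,0}$, $\widehat\psi_{i,J+1}=\widehat\psi_{i,J}$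 (existence, uniqueness and $\widehat\psi\ge0$ being known). *)

theory Defs
  imports "HOL-Analysis.Analysis"
begin

text \<open>Matrices (m_{i,j}), 0 <= i <= I, 0 <= j <= J, are represented as functions
  nat => nat => real; only entries with i <= I, j <= J are meaningful.
  Grid: dt = T/I, dx = 1/J, x_j = j*dx.\<close>

definition in_M_eps :: "nat \<Rightarrow> nat \<Rightarrow> real \<Rightarrow> (nat \<Rightarrow> nat \<Rightarrow> real) \<Rightarrow> bool" where
  "in_M_eps I J \<epsilon> m \<longleftrightarrow> (\<forall>i\<le>I. \<forall>j\<le>J. m i j \<ge> \<epsilon>)"

text \<open>The discrete scheme defining Psi-hat(phi); Neumann conventions
  psi_{i,-1} = psi_{i,0}, psi_{i,J+1} = psi_{i,J}.\<close>
definition psi_scheme ::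
  "real \<Rightarrow> real \<Rightarrow> nat \<Rightarrow> nat \<Rightarrow> (real \<Rightarrow> real) \<Rightarrow> (real \<Rightarrow> real \<Rightarrow> real)
   \<Rightarrow> (nat \<Rightarrow> nat \<Rightarrow> real) \<Rightarrow> (nat \<Rightarrow> nat \<Rightarrow> real) \<Rightarrow> bool" where
  "psi_scheme T \<sigma> I J m0 f \<phi> \<psi> \<longleftrightarrow>
     (let dt = T / real I; dx = 1 / real J; x = (\<lambda>j::nat. real j * dx) in
      (\<forall>j\<le>J. \<psi> 0 j = m0 (x j) / \<phi> 0 j) \<and>
      (\<forall>i<I. \<forall>j\<le>J.
         (let left = (if j = 0 then \<psi> (i+1) 0 else \<psi> (i+1) (j-1));
              right = (if j = J then \<psi> (i+1) J else \<psi> (i+1) (j+1)) in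
          (\<psi> (i+1) j - \<psi> i j) / dt
            - \<sigma>\<^sup>2 / 2 * ((right - 2 * \<psi> (i+1) j + left) / dx\<^sup>2)
          = 1 / \<sigma>\<^sup>2 * f (x j) (\<phi> (i+1) j * \<psi> (i+1) j) * \<psi> (i+1) j)))"

text \<open>Psi-hat(phi): the unique solution of the scheme (entries outside the index
  range normalised to 0 so that the description is unique).\<close>
definition Psi_hat ::
  "real \<Rightarrow> real \<Rightarrow> nat \<Rightarrow> nat \<Rightarrow> (real \<Rightarrow> real) \<Rightarrow> (real \<Rightarrow> real \<Rightarrow> real)
   \<Rightarrow> (nat \<Rightarrow> nat \<Rightarrow> real) \<Rightarrow> (nat \<Rightarrow> nat \<Rightarrow> real)" where
  "Psi_hat T \<sigma> I J m0 f \<phi> =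
     (THE \<psi>. psi_scheme T \<sigma> I J m0 f \<phi> \<psi> \<and> (\<forall>i j. (I < i \<or> J < j) \<longrightarrow> \<psi> i j = 0))"

end

theory Submission imports Defs begin

(* One time step of the scheme is a semi-implicit problem
     (u - a)/dt - sigma^2/2 * Lap_N u / dx^2 = R(u)
   for the discrete Neumann Laplacian Lap_N and a pointwise reaction term R.
   1. Comparison principle: at a grid point where u - v is minimal the Laplacian of
      u - v is nonnegative; hence if the data satisfy a >= b and the reactions satisfy
      R1(u_j) >= R2(v_j) wherever u_j < v_j, then u >= v.  Comparing with v = 0 gives
      positivity; comparing two steps with reaction f(x_j, p*y)*y/sigma^2 (f <= 0,
      f(x_j,.) nonincreasing) and p1 <= p2 gives monotonicity in p.
   2. Solvability of one step, by shooting: prescribe the boundary value u_0 = s, solve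
      the second-difference relation forward, and choose s by the intermediate value
      theorem so that the Neumann condition at j = J holds.
   3. By induction over time the scheme is monotone in phi (so also uniquely solvable),
      and it is solvable; hence Psi_hat, defined by THE, is its solution, and the
      theorem follows from the monotonicity of the scheme. *)

section \<open>The discrete Neumann Laplacian and one step of the scheme\<close>

definition neumann_lap :: "nat \<Rightarrow> (nat \<Rightarrow> real) \<Rightarrow> nat \<Rightarrow> real" where
  "neumann_lap J u j =
     (if j = J then u J else u (j + 1)) - 2 * u j + (if j = 0 then u 0 else u (j - 1))"

definition implicit_step :: "real \<Rightarrow> real \<Rightarrow> real \<Rightarrow> nat \<Rightarrow> (nat \<Rightarrow> real \<Rightarrow> real)
   \<Rightarrow> (nat \<Rightarrow> real) \<Rightarrow> (nat \<Rightarrow> real) \<Rightarrow> bool" where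
  "implicit_step dt dx \<sigma> J R a u \<longleftrightarrow>
     (\<forall>j\<le>J. (u j - a j) / dt - \<sigma>\<^sup>2 / 2 * (neumann_lap J u j / dx\<^sup>2) = R j (u j))"

definition mfg_reaction :: "real \<Rightarrow> (nat \<Rightarrow> real \<Rightarrow> real) \<Rightarrow> (nat \<Rightarrow> real) \<Rightarrow> nat \<Rightarrow> real \<Rightarrow> real" where
  "mfg_reaction \<sigma> g p j y = 1 / \<sigma>\<^sup>2 * g j (p j * y) * y"

definition grid_point :: "nat \<Rightarrow> nat \<Rightarrow> real" where
  "grid_point J j = real j * (1 / real J)"

lemma psi_scheme_iff:
  "psi_scheme T \<sigma> I J m0 f \<phi> \<psi> \<longleftrightarrow>
    (\<forall>j\<le>J. \<psi> 0 j = m0 (grid_point J j) / \<phi> 0 j) \<and>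
    (\<forall>i<I. implicit_step (T / real I) (1 / real J) \<sigma> J
              (mfg_reaction \<sigma> (\<lambda>j. f (grid_point J j)) (\<phi> (i + 1))) (\<psi> i) (\<psi> (i + 1)))"
  unfolding psi_scheme_def implicit_step_def mfg_reaction_def neumann_lap_def
    grid_point_def Let_def by simp

lemma implicit_step_cong:
  assumes "\<forall>j\<le>J. u j = u' j" "\<forall>j\<le>J. a j = a' j"
  shows "implicit_step dt dx \<sigma> J R a u \<longleftrightarrow> implicit_step dt dx \<sigma> J R a' u'"
proof -
  have "neumann_lap J u j = neumann_lap J u' j" if "j \<le> J" for j
    using assms(1) that unfolding neumann_lap_def by auto
  then show ?thesis unfolding implicit_step_def using assms by (metis (no_types, lifting))
qed

section \<open>Comparison principle\<close>

lemma exists_argmin_upto: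
  fixes w :: "nat \<Rightarrow> real"
  shows "\<exists>j\<le>J. \<forall>k\<le>J. w j \<le> w k"
proof -
  let ?m = "Min (w ` {..J})"
  have "?m \<in> w ` {..J}" by (rule Min_in) auto
  then obtain j where "j \<in> {..J}" "?m = w j" by (rule imageE)
  moreover have "\<forall>k\<le>J. ?m \<le> w k" by (intro allI impI Min_le) auto
  ultimately show ?thesis by force
qed

lemma neumann_lap_nonneg_at_min:
  assumes "j \<le> J" "\<forall>k\<le>J. w j \<le> w k"
  shows "neumann_lap J w j \<ge> 0"
proof -
  have "w j \<le> (if j = J then w J else w (j + 1))" using assms by auto
  moreover have "w j \<le> (if j = 0 then w 0 else w (j - 1))" using assms by auto
  ultimately show ?thesis unfolding neumann_lap_def by linarith
qed

lemma neumann_lap_diff: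
  "neumann_lap J u j - neumann_lap J v j = neumann_lap J (\<lambda>k. u k - v k) j"
  unfolding neumann_lap_def by simp

lemma implicit_step_comparison:
  assumes u: "implicit_step dt dx \<sigma> J R1 a u" and v: "implicit_step dt dx \<sigma> J R2 b v"
    and dt: "dt > 0" and data: "\<forall>j\<le>J. b j \<le> a j"
    and reaction: "\<forall>j\<le>J. u j < v j \<longrightarrow> R2 j (v j) \<le> R1 j (u j)"
  shows "\<forall>j\<le>J. v j \<le> u j"
proof -
  obtain j where j: "j \<le> J" and jmin: "\<forall>k\<le>J. u j - v j \<le> u k - v k"
    using exists_argmin_upto[of J "\<lambda>k. u k - v k"] by blast
  have lap: "\<sigma>\<^sup>2 / 2 * (neumann_lap J u j / dx\<^sup>2) - \<sigma>\<^sup>2 / 2 * (neumann_lap J v j / dx\<^sup>2) \<ge> 0"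
  proof -
    have "neumann_lap J u j - neumann_lap J v j \<ge> 0"
      unfolding neumann_lap_diff using neumann_lap_nonneg_at_min[OF j jmin] .
    then show ?thesis by (simp add: diff_divide_distrib[symmetric] right_diff_distrib[symmetric])
  qed
  have "v j \<le> u j"
  proof (rule ccontr)
    assume "\<not> v j \<le> u j"
    then have less: "u j < v j" by simp
    have "((u j - a j) - (v j - b j)) / dt < 0"
      using less data j dt by (intro divide_neg_pos) auto
    then have time: "(u j - a j) / dt - (v j - b j) / dt < 0" by (simp add: diff_divide_distrib)
    have "R2 j (v j) \<le> R1 j (u j)" using reaction j less by blast
    then show False using u v j time lap unfolding implicit_step_def by fastforce
  qed
  then show ?thesis using j jmin by force
qed

lemma implicit_step_nonneg:
  assumes u: "implicit_step dt dx \<sigma> J R a u" and "dt > 0" and "\<forall>j\<le>J. a j \<ge> 0"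
    and dissipative: "\<forall>j\<le>J. \<forall>y. R j y * y \<le> 0"
  shows "\<forall>j\<le>J. u j \<ge> 0"
proof -
  have zero: "implicit_step dt dx \<sigma> J (\<lambda>_ _. 0) (\<lambda>_. 0) (\<lambda>_. 0)"
    unfolding implicit_step_def neumann_lap_def by simp
  have "R j y \<ge> 0" if "j \<le> J" "y < 0" for j y
    using dissipative that by (metis mult_le_0_iff not_le)
  then show ?thesis
    using implicit_step_comparison[OF u zero \<open>dt > 0\<close>] assms(3) by auto
qed

lemma reaction_monotone:
  fixes g :: "real \<Rightarrow> real"
  assumes "antimono g" "\<forall>y. g y \<le> 0" "p1 \<le> p2" "0 \<le> p2" "u \<le> v" "0 \<le> v"
  shows "g (p2 * v) * v \<le> g (p1 * u) * u"
proof (cases "u \<ge> 0")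
  case True
  have "p1 * u \<le> p2 * v" using assms True
    by (meson mult_left_mono mult_right_mono order_trans)
  then have "g (p2 * v) \<le> g (p1 * u)" using assms(1) by (simp add: antimonoD)
  then have "g (p2 * v) * u \<le> g (p1 * u) * u" using True by (simp add: mult_right_mono)
  moreover have "g (p2 * v) * v \<le> g (p2 * v) * u" using assms(2,5)
    by (simp add: mult_left_mono_neg)
  ultimately show ?thesis by linarith
next
  case False
  then show ?thesis using assms(2,6)
    by (metis mult_nonpos_nonneg mult_nonpos_nonpos not_le order_trans less_imp_le)
qed

section \<open>Solvability of one step by shooting\<close>

text \<open>Shooting for \<open>neumann_lap J u j = k * q j (u j)\<close>: the pair
  \<open>(u\<^sub>n, u\<^sub>n\<^sub>+\<^sub>1 - u\<^sub>n)\<close> computed from the boundary value \<open>u\<^sub>0 = s\<close>.\<close>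
primrec shoot :: "(nat \<Rightarrow> real \<Rightarrow> real) \<Rightarrow> real \<Rightarrow> real \<Rightarrow> nat \<Rightarrow> real \<times> real" where
  "shoot q k s 0 = (s, k * q 0 s)"
| "shoot q k s (Suc n) = (fst (shoot q k s n) + snd (shoot q k s n),
     snd (shoot q k s n) + k * q (Suc n) (fst (shoot q k s n) + snd (shoot q k s n)))"

lemma shoot_solves:
  assumes "J > 0" "snd (shoot q k s J) = 0" "j \<le> J"
  shows "neumann_lap J (\<lambda>j. fst (shoot q k s j)) j = k * q j (fst (shoot q k s j))"
proof (cases j)
  case 0
  then show ?thesis using assms by (simp add: neumann_lap_def)
next
  case (Suc n)
  then show ?thesis
    using assms by (cases "j = J") (auto simp: neumann_lap_def)
qed

lemma shoot_above:
  assumes "\<forall>j\<le>J. \<forall>v\<ge>s. q j v \<ge> 0" "k \<ge> 0"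
  shows "n \<le> J \<Longrightarrow> fst (shoot q k s n) \<ge> s \<and> snd (shoot q k s n) \<ge> 0"
proof (induction n)
  case 0
  then show ?case using assms by simp
next
  case (Suc n)
  then have "fst (shoot q k s n) \<ge> s" "snd (shoot q k s n) \<ge> 0" by auto
  moreover have "q (Suc n) (fst (shoot q k s n) + snd (shoot q k s n)) \<ge> 0"
    using assms(1) Suc.prems calculation by auto
  ultimately show ?case using assms(2) by simp
qed

lemma shoot_below:
  assumes "\<forall>j\<le>J. \<forall>v\<le>s. q j v \<le> 0" "k \<ge> 0"
  shows "n \<le> J \<Longrightarrow> fst (shoot q k s n) \<le> s \<and> snd (shoot q k s n) \<le> 0"
proof (induction n)
  case 0
  then show ?case using assms by (simp add: mult_nonneg_nonpos)
next
  case (Suc n)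
  then have "fst (shoot q k s n) \<le> s" "snd (shoot q k s n) \<le> 0" by auto
  moreover have "q (Suc n) (fst (shoot q k s n) + snd (shoot q k s n)) \<le> 0"
    using assms(1) Suc.prems calculation by auto
  ultimately show ?case using assms(2) by (simp add: mult_nonneg_nonpos add_nonpos_nonpos)
qed

lemma shoot_continuous:
  assumes "\<forall>j\<le>J. continuous_on UNIV (q j)"
  shows "n \<le> J \<Longrightarrow> continuous_on UNIV (\<lambda>s. fst (shoot q k s n))
                   \<and> continuous_on UNIV (\<lambda>s. snd (shoot q k s n))"
proof (induction n)
  case 0
  then show ?case using assms by (auto intro!: continuous_intros)
next
  case (Suc n)
  then have sum: "continuous_on UNIV (\<lambda>s. fst (shoot q k s n) + snd (shoot q k s n))"
    and incr: "continuous_on UNIV (\<lambda>s. snd (shoot q k s n))"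
    by (simp_all add: continuous_on_add)
  have "continuous_on UNIV (\<lambda>s. q (Suc n) (fst (shoot q k s n) + snd (shoot q k s n)))"
    using assms Suc.prems by (intro continuous_on_compose2[OF _ sum]) auto
  then show ?case using sum incr by (auto intro!: continuous_intros)
qed

lemma neumann_problem_solvable:
  assumes "J > 0" "k \<ge> 0" "B \<ge> 0"
    and cont: "\<forall>j\<le>J. continuous_on UNIV (q j)"
    and above: "\<forall>j\<le>J. \<forall>v\<ge>B. q j v \<ge> 0" and below: "\<forall>j\<le>J. \<forall>v\<le>-B. q j v \<le> 0"
  shows "\<exists>u. \<forall>j\<le>J. neumann_lap J u j = k * q j (u j)"
proof -
  have "snd (shoot q k B J) \<ge> 0" using shoot_above[OF above \<open>k \<ge> 0\<close>] by auto
  moreover have "snd (shoot q k (-B) J) \<le> 0" using shoot_below[OF below \<open>k \<ge> 0\<close>] by auto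
  moreover have "continuous_on {-B..B} (\<lambda>s. snd (shoot q k s J))"
    using shoot_continuous[OF cont, of J k] continuous_on_subset by blast
  ultimately obtain s where "snd (shoot q k s J) = 0"
    using IVT'[of "\<lambda>s. snd (shoot q k s J)" "-B" 0 B] \<open>B \<ge> 0\<close> by auto
  then show ?thesis using shoot_solves[OF \<open>J > 0\<close>] by blast
qed

lemma implicit_step_exists:
  assumes "dt > 0" "dx > 0" "\<sigma> > 0" "J > 0"
    and dissipative: "\<forall>j\<le>J. \<forall>y. R j y * y \<le> 0" and cont: "\<forall>j\<le>J. continuous_on UNIV (R j)"
  shows "\<exists>u. implicit_step dt dx \<sigma> J R a u"
proof -
  define q where "q = (\<lambda>j v. (v - a j) / dt - R j v)"
  define B where "B = (\<Sum>j\<le>J. \<bar>a j\<bar>) + 1"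
  have aB: "\<bar>a j\<bar> + 1 \<le> B" if "j \<le> J" for j
    unfolding B_def using member_le_sum[of j "{..J}" "\<lambda>j. \<bar>a j\<bar>"] that by auto
  have R_sign: "0 < v \<Longrightarrow> R j v \<le> 0" "v < 0 \<Longrightarrow> R j v \<ge> 0" if "j \<le> J" for j v
    using dissipative that by (metis mult_le_0_iff not_le)+
  have "\<exists>u. \<forall>j\<le>J. neumann_lap J u j = (2 * dx\<^sup>2 / \<sigma>\<^sup>2) * q j (u j)"
  proof (rule neumann_problem_solvable[OF \<open>J > 0\<close>])
    show "\<forall>j\<le>J. continuous_on UNIV (q j)"
      unfolding q_def using cont assms(1) by (auto intro!: continuous_intros)
    show "\<forall>j\<le>J. \<forall>v\<ge>B. q j v \<ge> 0"
    proof (intro allI impI)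
      fix j v assume "j \<le> J" "B \<le> v"
      then have "0 \<le> v - a j" "0 < v" using aB[of j] by auto
      moreover have "R j v \<le> 0" using R_sign(1)[OF \<open>j \<le> J\<close>] \<open>0 < v\<close> .
      ultimately show "q j v \<ge> 0" unfolding q_def using assms(1)
        by (smt (verit) divide_nonneg_pos)
    qed
    show "\<forall>j\<le>J. \<forall>v\<le>-B. q j v \<le> 0"
    proof (intro allI impI)
      fix j v assume "j \<le> J" "v \<le> -B"
      then have "v - a j \<le> 0" "v < 0" using aB[of j] by auto
      moreover have "R j v \<ge> 0" using R_sign(2)[OF \<open>j \<le> J\<close>] \<open>v < 0\<close> .
      ultimately show "q j v \<le> 0" unfolding q_def using assms(1)
        by (smt (verit) divide_nonpos_pos)
    qed
  qed (auto simp: B_def sum_nonneg add_nonneg_pos)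
  then obtain u where "\<forall>j\<le>J. neumann_lap J u j = (2 * dx\<^sup>2 / \<sigma>\<^sup>2) * q j (u j)" by blast
  then have "implicit_step dt dx \<sigma> J R a u"
    unfolding implicit_step_def q_def using assms(2,3) by (auto simp: field_simps)
  then show ?thesis by blast
qed

section \<open>The full scheme\<close>

definition admissible_nonlinearity :: "nat \<Rightarrow> (real \<Rightarrow> real \<Rightarrow> real) \<Rightarrow> bool" where
  "admissible_nonlinearity J f \<longleftrightarrow> (\<forall>j\<le>J.
     (\<forall>y. f (grid_point J j) y \<le> 0) \<and> antimono (f (grid_point J j))
     \<and> continuous_on UNIV (f (grid_point J j)))"

lemma mfg_reaction_dissipative:
  assumes "\<forall>y. g j y \<le> 0"
  shows "mfg_reaction \<sigma> g p j y * y \<le> 0"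
proof -
  have "g j (p j * y) * (y * y) \<le> 0" using assms by (simp add: mult_nonpos_nonneg)
  then have "g j (p j * y) * (y * y) / \<sigma>\<^sup>2 \<le> 0" by (simp add: divide_nonpos_nonneg)
  then show ?thesis unfolding mfg_reaction_def by (simp add: mult.assoc)
qed

lemma scheme_antitone:
  assumes "T > 0" "I > 0" and f: "admissible_nonlinearity J f"
    and S1: "psi_scheme T \<sigma> I J m0 f \<phi>1 \<psi>1" and S2: "psi_scheme T \<sigma> I J m0 f \<phi>2 \<psi>2"
    and \<phi>: "\<forall>i\<le>I. \<forall>j\<le>J. 0 < \<phi>1 i j \<and> \<phi>1 i j \<le> \<phi>2 i j"
    and m0: "\<forall>j\<le>J. m0 (grid_point J j) \<ge> 0"
  shows "i \<le> I \<Longrightarrow> \<forall>j\<le>J. 0 \<le> \<psi>2 i j \<and> \<psi>2 i j \<le> \<psi>1 i j"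
proof (induction i)
  case 0
  have "0 \<le> m0 (grid_point J j) / \<phi>2 0 j \<and> m0 (grid_point J j) / \<phi>2 0 j \<le> m0 (grid_point J j) / \<phi>1 0 j"
    if "j \<le> J" for j
  proof -
    have "0 < \<phi>1 0 j" "\<phi>1 0 j \<le> \<phi>2 0 j" "0 \<le> m0 (grid_point J j)" using \<phi> m0 that by auto
    then show ?thesis by (simp add: divide_left_mono)
  qed
  then show ?case using S1 S2 unfolding psi_scheme_iff by auto
next
  case (Suc i)
  then have IH: "\<forall>j\<le>J. 0 \<le> \<psi>2 i j \<and> \<psi>2 i j \<le> \<psi>1 i j" and "i < I" by auto
  let ?g = "\<lambda>j. f (grid_point J j)"
  have dt: "T / real I > 0" using assms(1,2) by simp
  have g: "\<forall>y. ?g j y \<le> 0" "antimono (?g j)" if "j \<le> J" for j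
    using f that unfolding admissible_nonlinearity_def by auto
  have step1: "implicit_step (T / real I) (1 / real J) \<sigma> J (mfg_reaction \<sigma> ?g (\<phi>1 (i+1))) (\<psi>1 i) (\<psi>1 (i+1))"
    and step2: "implicit_step (T / real I) (1 / real J) \<sigma> J (mfg_reaction \<sigma> ?g (\<phi>2 (i+1))) (\<psi>2 i) (\<psi>2 (i+1))"
    using S1 S2 \<open>i < I\<close> unfolding psi_scheme_iff by auto
  have nonneg: "\<forall>j\<le>J. 0 \<le> \<psi>2 (i+1) j"
    using implicit_step_nonneg[OF step2 dt] IH g mfg_reaction_dissipative by auto
  have "mfg_reaction \<sigma> ?g (\<phi>2 (i+1)) j (\<psi>2 (i+1) j) \<le> mfg_reaction \<sigma> ?g (\<phi>1 (i+1)) j (\<psi>1 (i+1) j)"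
    if "j \<le> J" "\<psi>1 (i+1) j < \<psi>2 (i+1) j" for j
  proof -
    have "0 < \<phi>1 (i+1) j" "\<phi>1 (i+1) j \<le> \<phi>2 (i+1) j" using \<phi> Suc.prems that(1) by auto
    then have "?g j (\<phi>2 (i+1) j * \<psi>2 (i+1) j) * \<psi>2 (i+1) j
             \<le> ?g j (\<phi>1 (i+1) j * \<psi>1 (i+1) j) * \<psi>1 (i+1) j"
      using reaction_monotone g[OF that(1)] nonneg that by auto
    then show ?thesis unfolding mfg_reaction_def by (simp add: mult.assoc divide_right_mono)
  qed
  then have "\<forall>j\<le>J. \<psi>2 (i+1) j \<le> \<psi>1 (i+1) j"
    using implicit_step_comparison[OF step1 step2 dt] IH by auto
  then show ?case using nonneg by simp
qed

definition scheme_solution ::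
  "real \<Rightarrow> real \<Rightarrow> nat \<Rightarrow> nat \<Rightarrow> (real \<Rightarrow> real) \<Rightarrow> (real \<Rightarrow> real \<Rightarrow> real)
   \<Rightarrow> (nat \<Rightarrow> nat \<Rightarrow> real) \<Rightarrow> (nat \<Rightarrow> nat \<Rightarrow> real) \<Rightarrow> bool" where
  "scheme_solution T \<sigma> I J m0 f \<phi> \<psi> \<longleftrightarrow>
     psi_scheme T \<sigma> I J m0 f \<phi> \<psi> \<and> (\<forall>i j. (I < i \<or> J < j) \<longrightarrow> \<psi> i j = 0)"

lemma scheme_solution_unique:
  assumes "T > 0" "I > 0" "admissible_nonlinearity J f"
    and "\<forall>i\<le>I. \<forall>j\<le>J. 0 < \<phi> i j" and "\<forall>j\<le>J. m0 (grid_point J j) \<ge> 0"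
    and S: "scheme_solution T \<sigma> I J m0 f \<phi> \<psi>" and S': "scheme_solution T \<sigma> I J m0 f \<phi> \<psi>'"
  shows "\<psi> = \<psi>'"
proof -
  have \<phi>: "\<forall>i\<le>I. \<forall>j\<le>J. 0 < \<phi> i j \<and> \<phi> i j \<le> \<phi> i j" using assms(4) by auto
  have P: "psi_scheme T \<sigma> I J m0 f \<phi> \<psi>" "psi_scheme T \<sigma> I J m0 f \<phi> \<psi>'"
    using S S' unfolding scheme_solution_def by auto
  have "\<psi> i j = \<psi>' i j" for i j
  proof (cases "i \<le> I \<and> j \<le> J")
    case True
    then show ?thesis
      using scheme_antitone[OF assms(1-3) P(1) P(2) \<phi> assms(5), of i]
        scheme_antitone[OF assms(1-3) P(2) P(1) \<phi> assms(5), of i] by fastforce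
  next
    case False
    then show ?thesis using S S' unfolding scheme_solution_def by auto
  qed
  then show ?thesis by blast
qed

primrec time_march :: "real \<Rightarrow> real \<Rightarrow> nat \<Rightarrow> nat \<Rightarrow> (real \<Rightarrow> real) \<Rightarrow> (real \<Rightarrow> real \<Rightarrow> real)
   \<Rightarrow> (nat \<Rightarrow> nat \<Rightarrow> real) \<Rightarrow> nat \<Rightarrow> nat \<Rightarrow> real" where
  "time_march T \<sigma> I J m0 f \<phi> 0 = (\<lambda>j. m0 (grid_point J j) / \<phi> 0 j)"
| "time_march T \<sigma> I J m0 f \<phi> (Suc i) = (SOME u. implicit_step (T / real I) (1 / real J) \<sigma> J
      (mfg_reaction \<sigma> (\<lambda>j. f (grid_point J j)) (\<phi> (Suc i))) (time_march T \<sigma> I J m0 f \<phi> i) u)"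

lemma scheme_solution_exists:
  assumes "T > 0" "I > 0" "\<sigma> > 0" "J > 0" and f: "admissible_nonlinearity J f"
  shows "\<exists>\<psi>. scheme_solution T \<sigma> I J m0 f \<phi> \<psi>"
proof -
  let ?u = "time_march T \<sigma> I J m0 f \<phi>"
  let ?R = "\<lambda>i. mfg_reaction \<sigma> (\<lambda>j. f (grid_point J j)) (\<phi> i)"
  define \<psi> where "\<psi> = (\<lambda>i j. if i \<le> I \<and> j \<le> J then ?u i j else 0)"
  have step: "implicit_step (T / real I) (1 / real J) \<sigma> J (?R (Suc i)) (?u i) (?u (Suc i))" for i
  proof -
    have cont: "\<forall>j\<le>J. continuous_on UNIV (?R (Suc i) j)"
    proof (intro allI impI)
      fix j assume "j \<le> J"
      then have "continuous_on UNIV (f (grid_point J j))"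
        using f unfolding admissible_nonlinearity_def by blast
      then have "continuous_on UNIV (\<lambda>y. f (grid_point J j) (\<phi> (Suc i) j * y))"
        by (rule continuous_on_compose2) (auto intro!: continuous_intros)
      then show "continuous_on UNIV (?R (Suc i) j)"
        unfolding mfg_reaction_def by (intro continuous_intros)
    qed
    have "\<forall>j\<le>J. \<forall>y. ?R (Suc i) j y * y \<le> 0"
      by (intro allI impI mfg_reaction_dissipative) (use f in \<open>auto simp: admissible_nonlinearity_def\<close>)
    then have "\<exists>u. implicit_step (T / real I) (1 / real J) \<sigma> J (?R (Suc i)) (?u i) u"
      using cont assms(1-4) by (intro implicit_step_exists) simp_all
    then show ?thesis by (simp add: someI_ex)
  qed
  have same_step: "implicit_step (T / real I) (1 / real J) \<sigma> J (?R (i + 1)) (\<psi> i) (\<psi> (i + 1))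
      \<longleftrightarrow> implicit_step (T / real I) (1 / real J) \<sigma> J (?R (i + 1)) (?u i) (?u (i + 1))"
    if "i < I" for i
    by (rule implicit_step_cong) (use that in \<open>auto simp: \<psi>_def\<close>)
  have "psi_scheme T \<sigma> I J m0 f \<phi> \<psi>"
    unfolding psi_scheme_iff
  proof (intro conjI allI impI)
    fix j assume "j \<le> J"
    then show "\<psi> 0 j = m0 (grid_point J j) / \<phi> 0 j" by (simp add: \<psi>_def)
  next
    fix i assume "i < I"
    then show "implicit_step (T / real I) (1 / real J) \<sigma> J (?R (i + 1)) (\<psi> i) (\<psi> (i + 1))"
      using same_step step[of i] by simp
  qed
  moreover have "\<forall>i j. (I < i \<or> J < j) \<longrightarrow> \<psi> i j = 0" unfolding \<psi>_def by auto
  ultimately show ?thesis unfolding scheme_solution_def by blast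
qed

lemma Psi_hat_solves_scheme:
  assumes "T > 0" "I > 0" "\<sigma> > 0" "J > 0" "admissible_nonlinearity J f"
    and "\<forall>i\<le>I. \<forall>j\<le>J. 0 < \<phi> i j" and "\<forall>j\<le>J. m0 (grid_point J j) \<ge> 0"
  shows "psi_scheme T \<sigma> I J m0 f \<phi> (Psi_hat T \<sigma> I J m0 f \<phi>)"
proof -
  obtain \<psi> where \<psi>: "scheme_solution T \<sigma> I J m0 f \<phi> \<psi>"
    using scheme_solution_exists[OF assms(1-5)] by blast
  have "scheme_solution T \<sigma> I J m0 f \<phi> (THE \<psi>. scheme_solution T \<sigma> I J m0 f \<phi> \<psi>)"
    by (rule theI[where P = "scheme_solution T \<sigma> I J m0 f \<phi>", OF \<psi>]) (rule scheme_solution_unique[OF assms(1,2,5-7) _ \<psi>])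
  then show ?thesis unfolding Psi_hat_def scheme_solution_def[abs_def] by simp
qed

lemma grid_point_in_unit_interval: "j \<le> J \<Longrightarrow> grid_point J j \<in> {0..1}"
  by (cases "J = 0") (auto simp: grid_point_def field_simps)

lemma admissible_nonlinearityI:
  assumes "continuous_on ({0..1} \<times> UNIV) (\<lambda>(x, y). f x y)"
    and "\<forall>x\<in>{0..1}. antimono (f x)" and "\<forall>x\<in>{0..1}. \<forall>y. f x y \<le> 0"
  shows "admissible_nonlinearity J f"
proof -
  have "continuous_on UNIV (f x)" if "x \<in> {0..1}" for x
  proof -
    have "continuous_on UNIV (\<lambda>y. (\<lambda>(x, y). f x y) (x, y))"
      by (rule continuous_on_compose2[OF assms(1)]) (use that in \<open>auto intro!: continuous_intros\<close>)
    then show ?thesis by simp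
  qed
  then show ?thesis
    using assms(2,3) grid_point_in_unit_interval unfolding admissible_nonlinearity_def by blast
qed

theorem proposition10:
  fixes T \<sigma> \<epsilon> :: real and I J :: nat
    and m0 :: "real \<Rightarrow> real" and f :: "real \<Rightarrow> real \<Rightarrow> real"
    and \<phi>1 \<phi>2 :: "nat \<Rightarrow> nat \<Rightarrow> real"
  assumes "T > 0" and "\<sigma> > 0" and "I > 0" and "J > 0"
    and "bounded (m0 ` {0..1})" and "\<forall>x\<in>{0..1}. m0 x \<ge> 0"
    and "continuous_on ({0..1} \<times> UNIV) (\<lambda>(x, y). f x y)"
    and "\<forall>x\<in>{0..1}. antimono (f x)"
    and "bounded ((\<lambda>(x, y). f x y) ` ({0..1} \<times> UNIV))"
    and "\<forall>x\<in>{0..1}. \<forall>y. f x y \<le> 0"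
    and "\<epsilon> > 0"
    and "in_M_eps I J \<epsilon> \<phi>1" and "in_M_eps I J \<epsilon> \<phi>2"
    and "\<forall>i\<le>I. \<forall>j\<le>J. \<phi>1 i j \<le> \<phi>2 i j"
  shows "\<forall>i\<le>I. \<forall>j\<le>J. Psi_hat T \<sigma> I J m0 f \<phi>1 i j \<ge> Psi_hat T \<sigma> I J m0 f \<phi>2 i j"
proof -
  have f: "admissible_nonlinearity J f" using admissible_nonlinearityI assms(7,8,10) .
  have m0: "\<forall>j\<le>J. m0 (grid_point J j) \<ge> 0" using assms(6) grid_point_in_unit_interval by blast
  have pos1: "\<forall>i\<le>I. \<forall>j\<le>J. 0 < \<phi>1 i j" and pos2: "\<forall>i\<le>I. \<forall>j\<le>J. 0 < \<phi>2 i j"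
    using assms(11-13) unfolding in_M_eps_def by (meson less_le_trans)+
  note solves = Psi_hat_solves_scheme[OF assms(1,3,2,4) f _ m0]
  show ?thesis
    using scheme_antitone[OF assms(1,3) f solves[OF pos1] solves[OF pos2] _ m0] pos1 assms(14)
    by auto
qed

end
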